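(* Let $\lambda\in\mathbb{R}$. Let $\psi\in C^\infty\big(\mathbb{R}^n\times(\mathbb{R}^n\setminus\{0\})\big)$ be positively homogeneous of degree $\lambda$ in $\xi$, i.e. $\psi(x,c\xi)=c^\lambda\psi(x,\xi)$ for $c>0$, and satisfy $\psi(x+\tau\xi,\xi)=\psi(x,\xi)$ for all $\tau\in\mathbb{R}$. Let $\varphi\in C^\infty(T\mathbb{S}^{n-1})$ be the restriction of $\psi$ to $T\mathbb{S}^{n-1}$. Then, for all $1\le i,j\le n$, $$(J_{ij}\psi)|_{T\mathbb{S}^{n-1}}=\big(\mathcal{J}_{ij}-(\lambda+1)(\xi_iX_j-\xi_jX_i)\big)\varphi.$$
   Context: $T\mathbb{S}^{n-1}=\{(x,\xi)\in\mathbb{R}^n\times\mathbb{R}^n:|\xi|=1,\ \langle x,\xi\rangle=0\}$. The John operators on $\mathbb{R}^n\times\mathbb{R}^n$ are $$J_{ij}=\frac{\partial^2}{\partial x^i\partial\xi^j}-\frac{\partial^2}{\partial x^j\partial\xi^i}.$$ Define vector fields on $\mathbb{R}^n\times\mathbb{R}^n$ (summation over $p$) $$\tilde X_i=\partial/\partial x^i-\xi_i\xi^p\,\partial/\partial x^p,\qquad \tilde\Xi_i=\partial/\partial\xi^i-x_i\xi^p\,\partial/\partial x^p-\xi_i\xi^p\,\partial/\partial\xi^p.$$ These are tangent to $T\mathbb{S}^{n-1}$; $X_i,\Xi_i$ are their restrictions to $T\mathbb{S}^{n-1}$, and $\mathcal{J}_{ij}=X_i\Xi_j-X_j\Xi_i$.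 Here $\xi_i=\xi^i$, and in $\xi_iX_j$, $\xi_i$ acts by multiplication. *)

theory Defs
  imports "HOL-Analysis.Analysis"
begin

definition dderiv :: "('a::real_normed_vector \<Rightarrow> real) \<Rightarrow> 'a \<Rightarrow> 'a \<Rightarrow> real" where
  "dderiv f v p = frechet_derivative f (at p) v"

fun iter_dderiv :: "'a::real_normed_vector list \<Rightarrow> ('a \<Rightarrow> real) \<Rightarrow> 'a \<Rightarrow> real" where
  "iter_dderiv [] f = f"
| "iter_dderiv (v # vs) f = dderiv (iter_dderiv vs f) v"

definition smooth_on :: "'a::real_normed_vector set \<Rightarrow> ('a \<Rightarrow> real) \<Rightarrow> bool" where
  "smooth_on U f \<longleftrightarrow> (\<forall>vs. iter_dderiv vs f differentiable_on U)"

definition dx :: "'n::finite \<Rightarrow> (real^'n) \<times> (real^'n)" where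
  "dx i = (axis i 1, 0)"

definition dxi :: "'n::finite \<Rightarrow> (real^'n) \<times> (real^'n)" where
  "dxi i = (0, axis i 1)"

definition John :: "'n::finite \<Rightarrow> 'n \<Rightarrow> ((real^'n) \<times> (real^'n) \<Rightarrow> real) \<Rightarrow> (real^'n) \<times> (real^'n) \<Rightarrow> real" where
  "John i j f = (\<lambda>p. dderiv (dderiv f (dxi j)) (dx i) p - dderiv (dderiv f (dxi i)) (dx j) p)"

definition TS :: "((real^'n::finite) \<times> (real^'n)) set" where
  "TS = {(x, \<xi>). norm \<xi> = 1 \<and> x \<bullet> \<xi> = 0}"

definition Xt :: "'n::finite \<Rightarrow> (real^'n) \<times> (real^'n) \<Rightarrow> (real^'n) \<times> (real^'n)" where
  "Xt i = (\<lambda>(x, \<xi>). (axis i 1 - (\<xi> $ i) *\<^sub>R \<xi>, 0))"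

definition Xit :: "'n::finite \<Rightarrow> (real^'n) \<times> (real^'n) \<Rightarrow> (real^'n) \<times> (real^'n)" where
  "Xit i = (\<lambda>(x, \<xi>). (- ((x $ i) *\<^sub>R \<xi>), axis i 1 - (\<xi> $ i) *\<^sub>R \<xi>))"

definition vf_on :: "'a::real_normed_vector set \<Rightarrow> ('a \<Rightarrow> 'a) \<Rightarrow> ('a \<Rightarrow> real) \<Rightarrow> 'a \<Rightarrow> real" where
  "vf_on M V f = (\<lambda>p. frechet_derivative f (at p within M) (V p))"

abbreviation Xop where "Xop i \<equiv> vf_on TS (Xt i)"
abbreviation Xiop where "Xiop i \<equiv> vf_on TS (Xit i)"

definition calJ :: "'n::finite \<Rightarrow> 'n \<Rightarrow> ((real^'n) \<times> (real^'n) \<Rightarrow> real) \<Rightarrow> (real^'n) \<times> (real^'n) \<Rightarrow> real" where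
  "calJ i j f = (\<lambda>p. Xop i (Xiop j f) p - Xop j (Xiop i f) p)"

end

theory Submission
  imports Defs
begin

(* Both sides are first-order expressions in the restriction, so everything reduces to
   computing X_i phi, Xi_j phi and X_i Xi_j phi through derivatives of psi.  A derivative within
   TS is read off from any extension to an open set, tested on velocities of curves in TS.
   Translation invariance kills the derivative of psi along (xi, 0), Euler's relation gives
   lam * psi along (0, xi), and differentiating the translation invariance in xi^j shows that
   d/dx^j psi = - (derivative of d/dxi^j psi along (xi, 0)).  Hence on TS
     X_i phi = d/dx^i psi,   Xi_j phi = d/dxi^j psi - lam xi_j psi,
     X_i Xi_j phi = d/dx^i d/dxi^j psi + xi_i d/dx^j psi - lam xi_j d/dx^i psi,
   and antisymmetrising in i, j gives the identity. *)

definition curve_velocity :: "'a::real_normed_vector set \<Rightarrow> 'a \<Rightarrow> 'a \<Rightarrow> bool" where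
  "curve_velocity S p v \<longleftrightarrow>
     (\<exists>\<gamma>. range \<gamma> \<subseteq> S \<and> \<gamma> 0 = p \<and> (\<gamma> has_derivative (\<lambda>t. t *\<^sub>R v)) (at 0))"

lemma has_derivative_within_unique_on_curve_velocity:
  assumes D1: "(h has_derivative D1) (at p within S)" and D2: "(h has_derivative D2) (at p within S)"
    and v: "curve_velocity S p v"
  shows "D1 v = D2 v"
proof -
  obtain \<gamma> where \<gamma>: "range \<gamma> \<subseteq> S" "\<gamma> 0 = p"
    and d\<gamma>: "(\<gamma> has_derivative (\<lambda>t. t *\<^sub>R v)) (at 0 within UNIV)"
    using v unfolding curve_velocity_def by auto
  have "(h has_derivative D) (at (\<gamma> 0) within range \<gamma>)"
    if "(h has_derivative D) (at p within S)" for D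
    using has_derivative_subset[OF that \<gamma>(1)] \<gamma>(2) by simp
  then have "((h \<circ> \<gamma>) has_derivative D \<circ> (\<lambda>t. t *\<^sub>R v)) (at 0)"
    if "(h has_derivative D) (at p within S)" for D
    using diff_chain_within[OF d\<gamma>] that by blast
  from this[OF D1] this[OF D2]
  have "D1 \<circ> (\<lambda>t. t *\<^sub>R v) = D2 \<circ> (\<lambda>t. t *\<^sub>R v)"
    by (rule has_derivative_unique)
  then show ?thesis
    by (metis comp_apply scaleR_one)
qed

lemma vf_on_eq_extension_derivative:
  assumes "p \<in> S" and eq: "\<And>q. q \<in> S \<Longrightarrow> h q = H q" and H: "(H has_derivative H') (at p)"
    and "curve_velocity S p (V p)"
  shows "vf_on S V h p = H' (V p)"
proof -
  have h: "(h has_derivative H') (at p within S)"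
    using has_derivative_at_withinI[OF H]
    by (rule has_derivative_transform_within[where d=1]) (auto simp: \<open>p \<in> S\<close> eq)
  then have "(h has_derivative frechet_derivative h (at p within S)) (at p within S)"
    using frechet_derivative_works differentiableI by blast
  with h show ?thesis
    unfolding vf_on_def using has_derivative_within_unique_on_curve_velocity assms(4) by blast
qed

lemma has_real_derivative_along_line:
  assumes "(f has_derivative f') (at q)"
  shows "((\<lambda>t. f (q + t *\<^sub>R v)) has_real_derivative f' v) (at 0)"
proof -
  have "((\<lambda>t::real. q + t *\<^sub>R v) has_derivative (\<lambda>t. t *\<^sub>R v)) (at 0)"
    by (auto intro!: derivative_eq_intros)
  from has_derivative_compose[OF this] assms
  have "((\<lambda>t. f (q + t *\<^sub>R v)) has_derivative (\<lambda>t. f' (t *\<^sub>R v))) (at 0)"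
    by simp
  moreover have "(\<lambda>t. f' (t *\<^sub>R v)) = (\<lambda>t. f' v * t)"
    using linear_scale[OF has_derivative_linear[OF assms]] by auto
  ultimately show ?thesis
    by (simp add: has_field_derivative_def mult_commute_abs)
qed

lemma has_derivative_dderiv:
  "f differentiable at q \<Longrightarrow> (f has_derivative (\<lambda>v. dderiv f v q)) (at q)"
  unfolding dderiv_def by (metis frechet_derivative_works)

lemma linear_dderiv:
  "f differentiable at q \<Longrightarrow> linear (\<lambda>v. dderiv f v q)"
  using has_derivative_dderiv has_derivative_linear by blast

lemma dderiv_add: "f differentiable at q \<Longrightarrow> dderiv f (u + v) q = dderiv f u q + dderiv f v q"
  using linear_add[OF linear_dderiv] by blast

lemma dderiv_diff: "f differentiable at q \<Longrightarrow> dderiv f (u - v) q = dderiv f u q - dderiv f v q"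
  using linear_diff[OF linear_dderiv] by blast

lemma dderiv_scaleR: "f differentiable at q \<Longrightarrow> dderiv f (c *\<^sub>R v) q = c * dderiv f v q"
  using linear_scale[OF linear_dderiv] by simp

lemma dderiv_eqI:
  assumes "f differentiable at q" and "\<forall>\<^sub>F t in nhds 0. f (q + t *\<^sub>R v) = c t"
    and "(c has_real_derivative d) (at 0)"
  shows "dderiv f v q = d"
proof -
  have "((\<lambda>t. f (q + t *\<^sub>R v)) has_real_derivative dderiv f v q) (at 0)"
    using has_real_derivative_along_line[OF has_derivative_dderiv[OF assms(1)]] .
  then have "(c has_real_derivative dderiv f v q) (at 0)"
    using DERIV_cong_ev[OF refl assms(2) refl] by blast
  then show ?thesis
    using DERIV_unique assms(3) by blast
qed

lemma differentiable_iter_dderiv: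
  "smooth_on U f \<Longrightarrow> open U \<Longrightarrow> q \<in> U \<Longrightarrow> iter_dderiv vs f differentiable at q"
  unfolding smooth_on_def using differentiable_on_eq_differentiable_at by blast

locale homogeneous_translation_invariant =
  fixes \<psi> :: "'a::real_normed_vector \<times> 'a \<Rightarrow> real" and lam :: real
  assumes smooth: "smooth_on (UNIV \<times> (UNIV - {0})) \<psi>"
    and homog: "\<And>x \<xi> c. \<xi> \<noteq> 0 \<Longrightarrow> c > 0 \<Longrightarrow> \<psi> (x, c *\<^sub>R \<xi>) = c powr lam * \<psi> (x, \<xi>)"
    and transl: "\<And>x \<xi> \<tau>. \<xi> \<noteq> 0 \<Longrightarrow> \<psi> (x + \<tau> *\<^sub>R \<xi>, \<xi>) = \<psi> (x, \<xi>)"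
begin

lemma differentiable_iter_dderiv_psi:
  assumes "snd q \<noteq> 0"
  shows "iter_dderiv vs \<psi> differentiable at q"
proof (rule differentiable_iter_dderiv[OF smooth])
  show "open (UNIV \<times> (UNIV - {0}) :: ('a \<times> 'a) set)"
    by (intro open_Times) auto
  show "q \<in> UNIV \<times> (UNIV - {0})"
    using assms by (cases q) auto
qed

lemma differentiable_psi: "snd q \<noteq> 0 \<Longrightarrow> \<psi> differentiable at q"
  using differentiable_iter_dderiv_psi[of q "[]"] by simp

lemma differentiable_dderiv_psi: "snd q \<noteq> 0 \<Longrightarrow> dderiv \<psi> v differentiable at q"
  using differentiable_iter_dderiv_psi[of q "[v]"] by simp

lemma dderiv_psi_line_direction:
  assumes "\<xi> \<noteq> 0"
  shows "dderiv \<psi> (\<xi>, 0) (x, \<xi>) = 0"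
  by (rule dderiv_eqI[where c="\<lambda>_. \<psi> (x, \<xi>)"]) (use assms differentiable_psi transl in auto)

lemma dderiv_psi_Euler:
  assumes "\<xi> \<noteq> 0"
  shows "dderiv \<psi> (0, \<xi>) (x, \<xi>) = lam * \<psi> (x, \<xi>)"
proof (rule dderiv_eqI[where c="\<lambda>t. (1 + t) powr lam * \<psi> (x, \<xi>)"])
  show "\<psi> differentiable at (x, \<xi>)"
    using assms differentiable_psi by simp
  have "\<forall>\<^sub>F t in nhds 0. t \<in> {-1::real<..}"
    by (intro eventually_nhds_in_open) auto
  then show "\<forall>\<^sub>F t in nhds 0. \<psi> ((x, \<xi>) + t *\<^sub>R (0, \<xi>)) = (1 + t) powr lam * \<psi> (x, \<xi>)"
    by eventually_elim (use homog[OF assms, of "1 + _" x] in \<open>simp add: algebra_simps\<close>)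
  show "((\<lambda>t. (1 + t) powr lam * \<psi> (x, \<xi>)) has_real_derivative lam * \<psi> (x, \<xi>)) (at 0)"
    by (auto intro!: derivative_eq_intros)
qed

(* Derivative in s of psi (x + tau (xi + s w), xi + s w) = psi (x, xi + s w) at s = 0. *)
lemma dderiv_psi_translated:
  assumes "\<xi> \<noteq> 0"
  shows "\<tau> * dderiv \<psi> (w, 0) (x + \<tau> *\<^sub>R \<xi>, \<xi>) + dderiv \<psi> (0, w) (x + \<tau> *\<^sub>R \<xi>, \<xi>)
           = dderiv \<psi> (0, w) (x, \<xi>)"
proof -
  let ?q = "(x + \<tau> *\<^sub>R \<xi>, \<xi>)"
  have "\<psi> differentiable at ?q"
    using assms differentiable_psi by simp
  then have "\<tau> * dderiv \<psi> (w, 0) ?q + dderiv \<psi> (0, w) ?q = dderiv \<psi> (\<tau> *\<^sub>R (w, 0) + (0, w)) ?q"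
    by (simp only: dderiv_add dderiv_scaleR)
  also from \<open>\<psi> differentiable at ?q\<close> have "\<dots> = dderiv \<psi> (0, w) (x, \<xi>)"
  proof (rule dderiv_eqI[where c="\<lambda>s. \<psi> ((x, \<xi>) + s *\<^sub>R (0, w))"])
    have "((\<lambda>s. \<xi> + s *\<^sub>R w) \<longlongrightarrow> \<xi>) (nhds 0)"
      by (auto intro!: tendsto_eq_intros filterlim_ident)
    then have "\<forall>\<^sub>F s in nhds 0. \<xi> + s *\<^sub>R w \<noteq> 0"
      using assms tendsto_imp_eventually_ne by blast
    then show "\<forall>\<^sub>F s in nhds 0. \<psi> (?q + s *\<^sub>R (\<tau> *\<^sub>R (w, 0) + (0, w))) = \<psi> ((x, \<xi>) + s *\<^sub>R (0, w))"
    proof eventually_elim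
      case (elim s)
      have "\<psi> (?q + s *\<^sub>R (\<tau> *\<^sub>R (w, 0) + (0, w))) = \<psi> (x + \<tau> *\<^sub>R (\<xi> + s *\<^sub>R w), \<xi> + s *\<^sub>R w)"
        by (simp add: algebra_simps)
      also have "\<dots> = \<psi> (x, \<xi> + s *\<^sub>R w)"
        by (rule transl[OF elim])
      finally show ?case
        by simp
    qed
    show "((\<lambda>s. \<psi> ((x, \<xi>) + s *\<^sub>R (0, w))) has_real_derivative dderiv \<psi> (0, w) (x, \<xi>)) (at 0)"
      using has_real_derivative_along_line[OF has_derivative_dderiv[OF differentiable_psi],
          of "(x, \<xi>)" "(0, w)"] assms
      by simp
  qed
  finally show ?thesis .
qed

lemma dderiv_dderiv_psi_line_direction:
  assumes "\<xi> \<noteq> 0"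
  shows "dderiv (dderiv \<psi> (0, w)) (\<xi>, 0) (x, \<xi>) = - dderiv \<psi> (w, 0) (x, \<xi>)"
proof -
  define B where "B \<tau> = dderiv \<psi> (w, 0) ((x, \<xi>) + \<tau> *\<^sub>R (\<xi>, 0))" for \<tau>
  have "(B has_real_derivative dderiv (dderiv \<psi> (w, 0)) (\<xi>, 0) (x, \<xi>)) (at 0)"
    unfolding B_def
    using has_real_derivative_along_line[OF has_derivative_dderiv[OF differentiable_dderiv_psi],
        of "(x, \<xi>)" "(w, 0)" "(\<xi>, 0)"] assms
    by simp
  then have "((\<lambda>\<tau>. dderiv \<psi> (0, w) (x, \<xi>) - \<tau> * B \<tau>) has_real_derivative - B 0) (at 0)"
    by (auto intro!: derivative_eq_intros)
  moreover have "dderiv \<psi> (0, w) ((x, \<xi>) + \<tau> *\<^sub>R (\<xi>, 0)) = dderiv \<psi> (0, w) (x, \<xi>) - \<tau> * B \<tau>"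
    for \<tau>
    using dderiv_psi_translated[OF assms, of \<tau> w x] unfolding B_def by simp
  ultimately show ?thesis
    by (intro dderiv_eqI[OF differentiable_dderiv_psi]) (auto simp: assms B_def)
qed

end

lemma unit_add_orthogonal_nonzero:
  fixes \<xi> w :: "'a::real_inner"
  assumes "norm \<xi> = 1" and "\<xi> \<bullet> w = 0"
  shows "\<xi> + w \<noteq> 0"
proof -
  have "\<xi> \<bullet> (\<xi> + w) = 1"
    using assms by (simp add: inner_add_right power2_norm_eq_inner[symmetric])
  then show ?thesis
    by (metis inner_zero_right zero_neq_one)
qed

lemma has_derivative_sgn_line:
  fixes \<xi> w :: "'a::real_inner"
  assumes "norm \<xi> = 1" and "\<xi> \<bullet> w = 0"
  shows "((\<lambda>t. sgn (\<xi> + t *\<^sub>R w)) has_derivative (\<lambda>t. t *\<^sub>R w)) (at 0)"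
proof -
  define u where "u t = \<xi> + t *\<^sub>R w" for t :: real
  have u0: "u 0 = \<xi>"
    by (simp add: u_def)
  have u_nz: "u t \<noteq> 0" for t
    using unit_add_orthogonal_nonzero[OF assms(1)] assms(2) by (simp add: u_def)
  have du: "(u has_derivative (\<lambda>t. t *\<^sub>R w)) (at 0)"
    unfolding u_def by (auto intro!: derivative_eq_intros)
  have "((\<lambda>t. norm (u t)) has_derivative (\<lambda>t. sgn (u 0) \<bullet> (t *\<^sub>R w))) (at 0)"
    using has_derivative_compose[OF du has_derivative_norm[OF u_nz]] by (simp add: inner_commute)
  then have dnorm: "((\<lambda>t. norm (u t)) has_derivative (\<lambda>t. 0)) (at 0)"
    using assms by (simp add: u0 sgn_div_norm)
  have "((\<lambda>t. (1 / norm (u t)) *\<^sub>R u t) has_derivative (\<lambda>t. t *\<^sub>R w)) (at 0)"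
    by (rule derivative_eq_intros dnorm du refl | simp add: u_nz u0 assms)+
  then show ?thesis
    by (simp add: u_def sgn_div_norm divide_inverse_commute)
qed

lemma TS_snd_nonzero: "p \<in> TS \<Longrightarrow> snd p \<noteq> 0"
  by (auto simp: TS_def)

lemma Xt_eq: "Xt i (x, \<xi>) = dx i - (\<xi> $ i) *\<^sub>R (\<xi>, 0)"
  by (simp add: Xt_def dx_def)

lemma Xit_eq: "Xit i (x, \<xi>) = dxi i - (\<xi> $ i) *\<^sub>R (0, \<xi>) - (x $ i) *\<^sub>R (\<xi>, 0)"
  by (simp add: Xit_def dxi_def)

lemma curve_velocity_TS_Xt:
  assumes "p \<in> TS"
  shows "curve_velocity TS p (Xt i p)"
  unfolding curve_velocity_def
proof (intro exI conjI)
  obtain x \<xi> where p: "p = (x, \<xi>)" and "norm \<xi> = 1" and "x \<bullet> \<xi> = 0"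
    using assms by (auto simp: TS_def)
  then have "(axis i 1 - (\<xi> $ i) *\<^sub>R \<xi>) \<bullet> \<xi> = 0"
    by (simp add: inner_diff_left inner_axis' power2_norm_eq_inner[symmetric])
  with \<open>norm \<xi> = 1\<close> \<open>x \<bullet> \<xi> = 0\<close> show "range (\<lambda>t. p + t *\<^sub>R Xt i p) \<subseteq> TS"
    by (auto simp: p Xt_def TS_def inner_add_left)
  show "((\<lambda>t. p + t *\<^sub>R Xt i p) has_derivative (\<lambda>t. t *\<^sub>R Xt i p)) (at 0)"
    by (auto intro!: derivative_eq_intros)
qed simp

lemma curve_velocity_TS_Xit:
  assumes "p \<in> TS"
  shows "curve_velocity TS p (Xit i p)"
proof -
  obtain x \<xi> where p: "p = (x, \<xi>)" and n: "norm \<xi> = 1" and o: "x \<bullet> \<xi> = 0"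
    using assms by (auto simp: TS_def)
  define w where "w = axis i 1 - (\<xi> $ i) *\<^sub>R \<xi>"
  have "\<xi> \<bullet> w = 0"
    using n by (simp add: w_def inner_diff_right inner_axis power2_norm_eq_inner[symmetric])
  define \<eta> where "\<eta> t = sgn (\<xi> + t *\<^sub>R w)" for t
  have d\<eta>: "(\<eta> has_derivative (\<lambda>t. t *\<^sub>R w)) (at 0)"
    unfolding \<eta>_def using has_derivative_sgn_line n \<open>\<xi> \<bullet> w = 0\<close> by blast
  have \<eta>_unit: "norm (\<eta> t) = 1" for t
    using unit_add_orthogonal_nonzero[OF n] \<open>\<xi> \<bullet> w = 0\<close> by (simp add: \<eta>_def norm_sgn)
  have \<eta>0: "\<eta> 0 = \<xi>"
    using n by (simp add: \<eta>_def sgn_div_norm)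
  define \<gamma> where "\<gamma> t = (x - (x \<bullet> \<eta> t) *\<^sub>R \<eta> t, \<eta> t)" for t
  have "range \<gamma> \<subseteq> TS"
    using \<eta>_unit by (auto simp: \<gamma>_def TS_def inner_diff_left dot_square_norm)
  moreover have "\<gamma> 0 = p"
    using o by (simp add: \<gamma>_def p \<eta>0)
  moreover have "(\<gamma> has_derivative (\<lambda>t. t *\<^sub>R Xit i p)) (at 0)"
    unfolding \<gamma>_def
    by (rule derivative_eq_intros d\<eta> refl)+
      (use o in \<open>simp add: \<eta>0 Xit_def p w_def inner_diff_right inner_axis algebra_simps\<close>)
  ultimately show ?thesis
    unfolding curve_velocity_def by blast
qed

locale TS_restriction = homogeneous_translation_invariant \<psi> lam
  for \<psi> :: "(real^'n::finite) \<times> (real^'n) \<Rightarrow> real" and lam +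
  fixes \<phi> :: "(real^'n) \<times> (real^'n) \<Rightarrow> real"
  assumes restr: "\<And>p. p \<in> TS \<Longrightarrow> \<phi> p = \<psi> p"
begin

lemma differentiable_psi_TS: "p \<in> TS \<Longrightarrow> \<psi> differentiable at p"
  using differentiable_psi TS_snd_nonzero by blast

lemma differentiable_dderiv_psi_TS: "p \<in> TS \<Longrightarrow> dderiv \<psi> v differentiable at p"
  using differentiable_dderiv_psi TS_snd_nonzero by blast

lemma dderiv_psi_Xt:
  assumes "p \<in> TS"
  shows "dderiv \<psi> (Xt i p) p = dderiv \<psi> (dx i) p"
proof -
  obtain x \<xi> where p: "p = (x, \<xi>)" and "\<xi> \<noteq> 0"
    using TS_snd_nonzero[OF assms] by (cases p) auto
  then show ?thesis
    using differentiable_psi_TS[OF assms] dderiv_psi_line_direction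
    by (simp add: Xt_eq dderiv_diff dderiv_scaleR del: scaleR_Pair)
qed

lemma dderiv_psi_Xit:
  assumes "p \<in> TS"
  shows "dderiv \<psi> (Xit j p) p = dderiv \<psi> (dxi j) p - lam * (snd p $ j * \<psi> p)"
proof -
  obtain x \<xi> where p: "p = (x, \<xi>)" and "\<xi> \<noteq> 0"
    using TS_snd_nonzero[OF assms] by (cases p) auto
  then show ?thesis
    using differentiable_psi_TS[OF assms] dderiv_psi_line_direction dderiv_psi_Euler
    by (simp add: Xit_eq dderiv_diff dderiv_scaleR del: scaleR_Pair)
qed

lemma Xop_restriction:
  assumes "p \<in> TS"
  shows "Xop i \<phi> p = dderiv \<psi> (dx i) p"
proof -
  have "Xop i \<phi> p = dderiv \<psi> (Xt i p) p"
    using restr has_derivative_dderiv[OF differentiable_psi_TS[OF assms]] curve_velocity_TS_Xt[OF assms]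
    by (rule vf_on_eq_extension_derivative[OF assms])
  then show ?thesis
    using dderiv_psi_Xt[OF assms] by simp
qed

lemma Xiop_restriction:
  assumes "p \<in> TS"
  shows "Xiop j \<phi> p = dderiv \<psi> (dxi j) p - lam * (snd p $ j * \<psi> p)"
proof -
  have "Xiop j \<phi> p = dderiv \<psi> (Xit j p) p"
    using restr has_derivative_dderiv[OF differentiable_psi_TS[OF assms]] curve_velocity_TS_Xit[OF assms]
    by (rule vf_on_eq_extension_derivative[OF assms])
  then show ?thesis
    using dderiv_psi_Xit[OF assms] by simp
qed

lemma Xop_Xiop_restriction:
  assumes "p \<in> TS"
  shows "Xop i (Xiop j \<phi>) p = dderiv (dderiv \<psi> (dxi j)) (dx i) p
           + snd p $ i * dderiv \<psi> (dx j) p - lam * (snd p $ j * dderiv \<psi> (dx i) p)"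
proof -
  obtain x \<xi> where p: "p = (x, \<xi>)"
    by fastforce
  have \<xi>: "\<xi> \<noteq> 0"
    using TS_snd_nonzero[OF assms] by (simp add: p)
  define D2 where "D2 v = dderiv (dderiv \<psi> (dxi j)) v p" for v
  have dG: "((\<lambda>q. dderiv \<psi> (dxi j) q - lam * (snd q $ j * \<psi> q)) has_derivative
          (\<lambda>v. D2 v - lam * (snd v $ j * \<psi> p + \<xi> $ j * dderiv \<psi> v p))) (at p)"
    unfolding D2_def
    using has_derivative_dderiv[OF differentiable_dderiv_psi_TS[OF assms, of "dxi j"]]
      has_derivative_dderiv[OF differentiable_psi_TS[OF assms]]
    by (auto intro!: derivative_eq_intros bounded_linear.has_derivative[OF bounded_linear_vec_nth]
        simp: p algebra_simps)
  have "Xop i (Xiop j \<phi>) p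
      = D2 (Xt i p) - lam * (snd (Xt i p) $ j * \<psi> p + \<xi> $ j * dderiv \<psi> (Xt i p) p)"
    by (rule vf_on_eq_extension_derivative[where V="Xt i",
          OF assms Xiop_restriction[of _ j] dG curve_velocity_TS_Xt[OF assms]])
  also have "snd (Xt i p) = 0"
    by (simp add: p Xt_def)
  also have "D2 (Xt i p) = D2 (dx i) + \<xi> $ i * dderiv \<psi> (dx j) p"
    using differentiable_dderiv_psi_TS[OF assms] dderiv_dderiv_psi_line_direction[OF \<xi>, of "axis j 1" x]
    by (simp add: p Xt_eq dderiv_diff dderiv_scaleR D2_def dx_def dxi_def del: scaleR_Pair)
  also have "dderiv \<psi> (Xt i p) p = dderiv \<psi> (dx i) p"
    by (rule dderiv_psi_Xt[OF assms])
  finally show ?thesis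
    by (simp add: p D2_def)
qed

end

theorem lemma3p1:
  fixes \<psi> \<phi> :: "(real^'n) \<times> (real^'n) \<Rightarrow> real" and lam :: real and i j :: 'n
  assumes smooth: "smooth_on (UNIV \<times> (UNIV - {0})) \<psi>"
    and homog: "\<And>x \<xi> c. \<xi> \<noteq> 0 \<Longrightarrow> c > 0 \<Longrightarrow> \<psi> (x, c *\<^sub>R \<xi>) = c powr lam * \<psi> (x, \<xi>)"
    and transl: "\<And>x \<xi> \<tau>. \<xi> \<noteq> 0 \<Longrightarrow> \<psi> (x + \<tau> *\<^sub>R \<xi>, \<xi>) = \<psi> (x, \<xi>)"
    and restr: "\<And>p. p \<in> TS \<Longrightarrow> \<phi> p = \<psi> p"
  shows "\<forall>p \<in> TS. John i j \<psi> p =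
           calJ i j \<phi> p - (lam + 1) * ((snd p $ i) * Xop j \<phi> p - (snd p $ j) * Xop i \<phi> p)"
proof
  fix p :: "(real^'n) \<times> (real^'n)"
  assume "p \<in> TS"
  interpret TS_restriction \<psi> lam \<phi>
    by unfold_locales (fact smooth homog transl restr)+
  show "John i j \<psi> p =
          calJ i j \<phi> p - (lam + 1) * ((snd p $ i) * Xop j \<phi> p - (snd p $ j) * Xop i \<phi> p)"
    using \<open>p \<in> TS\<close>
    by (simp add: John_def calJ_def Xop_restriction Xop_Xiop_restriction algebra_simps)
qed

end
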